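(* Let $\mathbf{A}\in V(\mathsf{BCA})$. Then: (1) $\mathbf{A}\models J_2x\approx x$ if and only if the $\{\wedge,\vee,\neg,0,1\}$-reduct of $\mathbf{A}$ is a Boolean algebra; (2) $\mathbf{A}\models J_2x\approx 1$ if and only if the $\{\wedge,\vee,\neg,0,1\}$-reduct of $\mathbf{A}$ is a semilattice (with zero). Here a semilattice means an involutive bisemilattice satisfying $x\vee y\approx x\wedge y$, equivalently $\neg x\approx x$, equivalently $0\approx 1$.
   Context: $\mathbf{WK}^e$ is the three-element algebra on $\{0,\tfrac12,1\}$ of type $\langle\wedge,\vee,\neg,J_2,0,1\rangle$. Its operations are: - $\neg$ swaps $0,1$ and fixes $\tfrac12$; - $\wedge,\vee$ are Boolean on $\{0,1\}$ and return $\tfrac12$ if some argument is $\tfrac12$; - $J_2(1)=1$ and $J_2(\tfrac12)=J_2(0)=0$. $\mathsf{BCA}=ISP(\mathbf{WK}^e)$ and $V(\mathsf{BCA})=HSP(\mathbf{WK}^e)$. An involutive bisemilattice is an algebra $\langle A,\wedge,\vee,\neg,0,1\rangle$ satisfying: - $x\vee x\approx x$; - $x\vee y\approx y\vee x$; - $x\vee(y\vee z)\approx(x\vee y)\vee z$; - $\neg\neg x\approx x$; - $x\wedge y\approx\neg(\neg x\vee\neg y)$; - $x\wedge(\neg x\vee y)\approx x\wedge y$; - $0\vee x\approx x$; - $1\approx\neg 0$. The $\{\wedge,\vee,\neg,0,1\}$-reduct of every member of $V(\mathsf{BCA})$ is an involutive bisemilattice. *)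

theory Defs
  imports Main
begin

record 'a alg =
  carrier :: "'a set"
  meet :: "'a \<Rightarrow> 'a \<Rightarrow> 'a"
  join :: "'a \<Rightarrow> 'a \<Rightarrow> 'a"
  neg  :: "'a \<Rightarrow> 'a"
  J2   :: "'a \<Rightarrow> 'a"
  zero :: "'a"
  one  :: "'a"

datatype wk = W0 | Wh | W1   (* W0 = 0, Wh = 1/2, W1 = 1 *)

fun wk_neg :: "wk \<Rightarrow> wk" where
  "wk_neg W0 = W1" | "wk_neg Wh = Wh" | "wk_neg W1 = W0"

fun wk_meet :: "wk \<Rightarrow> wk \<Rightarrow> wk" where
  "wk_meet Wh _ = Wh" | "wk_meet _ Wh = Wh"
| "wk_meet W1 W1 = W1" | "wk_meet _ _ = W0"

fun wk_join :: "wk \<Rightarrow> wk \<Rightarrow> wk" where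
  "wk_join Wh _ = Wh" | "wk_join _ Wh = Wh"
| "wk_join W0 W0 = W0" | "wk_join _ _ = W1"

fun wk_J2 :: "wk \<Rightarrow> wk" where
  "wk_J2 W1 = W1" | "wk_J2 Wh = W0" | "wk_J2 W0 = W0"

definition WKe :: "wk alg" where
  "WKe = \<lparr>carrier = UNIV, meet = wk_meet, join = wk_join, neg = wk_neg,
          J2 = wk_J2, zero = W0, one = W1\<rparr>"

section \<open>Membership in V(BCA) = HSP(WK^e)\<close>

definition subuniv_power :: "('i \<Rightarrow> wk) set \<Rightarrow> bool" where
  "subuniv_power S \<longleftrightarrow>
     (\<lambda>_. W0) \<in> S \<and> (\<lambda>_. W1) \<in> S \<and>
     (\<forall>f\<in>S. \<forall>g\<in>S. (\<lambda>i. wk_meet (f i) (g i)) \<in> S \<and> (\<lambda>i. wk_join (f i) (g i)) \<in> S) \<and>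
     (\<forall>f\<in>S. (\<lambda>i. wk_neg (f i)) \<in> S \<and> (\<lambda>i. wk_J2 (f i)) \<in> S)"

definition onto_hom :: "('i \<Rightarrow> wk) set \<Rightarrow> (('i \<Rightarrow> wk) \<Rightarrow> 'a) \<Rightarrow> 'a alg \<Rightarrow> bool" where
  "onto_hom S h A \<longleftrightarrow>
     h ` S = carrier A \<and>
     h (\<lambda>_. W0) = zero A \<and> h (\<lambda>_. W1) = one A \<and>
     (\<forall>f\<in>S. \<forall>g\<in>S. h (\<lambda>i. wk_meet (f i) (g i)) = meet A (h f) (h g) \<and>
                     h (\<lambda>i. wk_join (f i) (g i)) = join A (h f) (h g)) \<and>
     (\<forall>f\<in>S. h (\<lambda>i. wk_neg (f i)) = neg A (h f) \<and> h (\<lambda>i. wk_J2 (f i)) = J2 A (h f))"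

definition in_V_BCA :: "'i itself \<Rightarrow> 'a alg \<Rightarrow> bool" where
  "in_V_BCA _ A \<longleftrightarrow> (\<exists>(S :: ('i \<Rightarrow> wk) set) h. subuniv_power S \<and> onto_hom S h A)"

definition boolean_algebra_reduct :: "'a alg \<Rightarrow> bool" where
  "boolean_algebra_reduct A \<longleftrightarrow>
    (let C = carrier A; m = meet A; j = join A; n = neg A; z = zero A; u = one A in
     z \<in> C \<and> u \<in> C \<and>
     (\<forall>x\<in>C. \<forall>y\<in>C. m x y \<in> C \<and> j x y \<in> C) \<and> (\<forall>x\<in>C. n x \<in> C) \<and>
     (\<forall>x\<in>C. \<forall>y\<in>C. m x y = m y x \<and> j x y = j y x) \<and>
     (\<forall>x\<in>C. \<forall>y\<in>C. \<forall>w\<in>C. m x (m y w) = m (m x y) w \<and> j x (j y w) = j (j x y) w) \<and>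
     (\<forall>x\<in>C. \<forall>y\<in>C. m x (j x y) = x \<and> j x (m x y) = x) \<and>
     (\<forall>x\<in>C. \<forall>y\<in>C. \<forall>w\<in>C. m x (j y w) = j (m x y) (m x w)) \<and>
     (\<forall>x\<in>C. m x (n x) = z \<and> j x (n x) = u))"

definition involutive_bisemilattice :: "'a alg \<Rightarrow> bool" where
  "involutive_bisemilattice A \<longleftrightarrow>
    (let C = carrier A; m = meet A; j = join A; n = neg A; z = zero A; u = one A in
     z \<in> C \<and> u \<in> C \<and>
     (\<forall>x\<in>C. \<forall>y\<in>C. m x y \<in> C \<and> j x y \<in> C) \<and> (\<forall>x\<in>C. n x \<in> C) \<and>
     (\<forall>x\<in>C. j x x = x) \<and>
     (\<forall>x\<in>C. \<forall>y\<in>C. j x y = j y x) \<and>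
     (\<forall>x\<in>C. \<forall>y\<in>C. \<forall>w\<in>C. j x (j y w) = j (j x y) w) \<and>
     (\<forall>x\<in>C. n (n x) = x) \<and>
     (\<forall>x\<in>C. \<forall>y\<in>C. m x y = n (j (n x) (n y))) \<and>
     (\<forall>x\<in>C. \<forall>y\<in>C. m x (j (n x) y) = m x y) \<and>
     (\<forall>x\<in>C. j z x = x) \<and>
     u = n z)"

definition semilattice_reduct :: "'a alg \<Rightarrow> bool" where
  "semilattice_reduct A \<longleftrightarrow> involutive_bisemilattice A \<and>
     (\<forall>x\<in>carrier A. \<forall>y\<in>carrier A. join A x y = meet A x y)"

end

theory Submission
  imports Defs
begin

text \<open>An identity of \<open>WK\<^sup>e\<close> holds coordinatewise in every subpower, and homomorphic images
  preserve it, so every member \<open>A\<close> of \<open>V(BCA)\<close> satisfies all identities of \<open>WK\<^sup>e\<close>.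
  If moreover \<open>J\<^sub>2 x = x\<close> in \<open>A\<close>, each element \<open>h f\<close> equals \<open>h (J\<^sub>2 \<circ> f)\<close> with \<open>J\<^sub>2 \<circ> f\<close>
  \<open>{0,1}\<close>-valued, so \<open>A\<close> even satisfies the identities of the Boolean subalgebra \<open>{0,1}\<close>, among
  them the Boolean algebra axioms. Conversely, in a Boolean algebra the \<open>WK\<^sup>e\<close>-identity
  \<open>J\<^sub>2 x \<and> (J\<^sub>2 x \<or> x) = x\<close> collapses to \<open>J\<^sub>2 x = x\<close> by absorption.
  For semilattices, the \<open>WK\<^sup>e\<close>-identity \<open>x \<and> y = (x \<or> y) \<and> J\<^sub>2 (x \<and> y)\<close> turns \<open>J\<^sub>2 x = 1\<close>
  into \<open>x \<and> y = x \<or> y\<close>; and if \<open>\<or>\<close> and \<open>\<and>\<close> coincide, then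
  \<open>J\<^sub>2 x = 0 \<or> J\<^sub>2 x = 0 \<and> J\<^sub>2 x = 0 \<and> 1 = 0 \<or> 1 = 1\<close> by the identity \<open>0 \<and> J\<^sub>2 x = 0 \<and> 1\<close>.\<close>

datatype 'v tm = Var 'v | Meet "'v tm" "'v tm" | Join "'v tm" "'v tm" | Neg "'v tm"
  | Jtwo "'v tm" | Bot | Top

fun eval :: "'a alg \<Rightarrow> ('v \<Rightarrow> 'a) \<Rightarrow> 'v tm \<Rightarrow> 'a" where
  "eval A \<rho> (Var v) = \<rho> v"
| "eval A \<rho> (Meet s t) = meet A (eval A \<rho> s) (eval A \<rho> t)"
| "eval A \<rho> (Join s t) = join A (eval A \<rho> s) (eval A \<rho> t)"
| "eval A \<rho> (Neg t) = neg A (eval A \<rho> t)"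
| "eval A \<rho> (Jtwo t) = J2 A (eval A \<rho> t)"
| "eval A \<rho> Bot = zero A"
| "eval A \<rho> Top = one A"

lemma WKe_simps [simp]:
  "carrier WKe = UNIV" "meet WKe = wk_meet" "join WKe = wk_join" "neg WKe = wk_neg"
  "J2 WKe = wk_J2" "zero WKe = W0" "one WKe = W1"
  by (simp_all add: WKe_def)

lemma UNIV_wk: "UNIV = {W0, Wh, W1}"
  using wk.exhaust by auto

lemma eval_cong: "(\<And>v. v \<in> set_tm t \<Longrightarrow> \<rho> v = \<rho>' v) \<Longrightarrow> eval A \<rho> t = eval A \<rho>' t"
  by (induction t) auto

lemma eval_carrier_update [simp]: "eval (A\<lparr>carrier := C\<rparr>) \<rho> t = eval A \<rho> t"
  by (induction t) simp_all

definition satisfies :: "'a alg \<Rightarrow> 'v tm \<Rightarrow> 'v tm \<Rightarrow> bool" where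
  "satisfies A s t \<longleftrightarrow>
     (\<forall>\<rho>. (\<forall>v \<in> set_tm s \<union> set_tm t. \<rho> v \<in> carrier A) \<longrightarrow> eval A \<rho> s = eval A \<rho> t)"

lemma satisfies_3varsD:
  assumes "satisfies A s t" "set_tm s \<union> set_tm t \<subseteq> {0, 1, 2}"
    and "x \<in> carrier A" "y \<in> carrier A" "w \<in> carrier A"
  shows "eval A ((!) [x, y, w]) s = eval A ((!) [x, y, w]) t"
proof -
  have "[x, y, w] ! v \<in> carrier A" if "v \<in> set_tm s \<union> set_tm t" for v
    using that assms(2-) by (auto simp: numeral_2_eq_2)
  then show ?thesis
    using assms(1) unfolding satisfies_def by blast
qed

lemma satisfies_3varsI:
  assumes "set_tm s \<union> set_tm t \<subseteq> {0, 1, 2}" and "c \<in> carrier A"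
    and "\<forall>x \<in> carrier A. \<forall>y \<in> carrier A. \<forall>w \<in> carrier A.
           eval A ((!) [x, y, w]) s = eval A ((!) [x, y, w]) t"
  shows "satisfies A s t"
  unfolding satisfies_def
proof (intro allI impI)
  fix \<rho> assume \<rho>: "\<forall>v \<in> set_tm s \<union> set_tm t. \<rho> v \<in> carrier A"
  (* \<rho> need not map 0, 1, 2 into the carrier when they are not variables of s, t, so they
     are redirected to c; on an empty carrier the premise is vacuous, yet a ground identity may fail *)
  define r where "r v = (if \<rho> v \<in> carrier A then \<rho> v else c)" for v
  have r: "r v \<in> carrier A" for v
    using assms(2) by (simp add: r_def)
  have "\<rho> v = [r 0, r 1, r 2] ! v" if "v \<in> set_tm s \<union> set_tm t" for v
    using that assms(1) \<rho> by (auto simp: r_def numeral_2_eq_2)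
  then have "eval A \<rho> s = eval A ((!) [r 0, r 1, r 2]) s" "eval A \<rho> t = eval A ((!) [r 0, r 1, r 2]) t"
    by (auto intro: eval_cong)
  then show "eval A \<rho> s = eval A \<rho> t"
    using assms(3) r by simp
qed

definition WK2 :: "wk alg" where
  "WK2 = WKe\<lparr>carrier := {W0, W1}\<rparr>"

definition ba_identities :: "(nat tm \<times> nat tm) list" where
  "ba_identities = (let x = Var 0; y = Var 1; w = Var 2 in
     [(Meet x y, Meet y x), (Join x y, Join y x),
      (Meet x (Meet y w), Meet (Meet x y) w), (Join x (Join y w), Join (Join x y) w),
      (Meet x (Join x y), x), (Join x (Meet x y), x),
      (Meet x (Join y w), Join (Meet x y) (Meet x w)),
      (Meet x (Neg x), Bot), (Join x (Neg x), Top)])"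

definition ib_identities :: "(nat tm \<times> nat tm) list" where
  "ib_identities = (let x = Var 0; y = Var 1; w = Var 2 in
     [(Join x x, x), (Join x y, Join y x), (Join x (Join y w), Join (Join x y) w),
      (Neg (Neg x), x), (Meet x y, Neg (Join (Neg x) (Neg y))),
      (Meet x (Join (Neg x) y), Meet x y), (Join Bot x, x), (Top, Neg Bot)])"

lemma WK2_satisfies_ba_identities: "(s, t) \<in> set ba_identities \<Longrightarrow> satisfies WK2 s t"
  unfolding ba_identities_def Let_def
  by (auto simp: WK2_def intro!: satisfies_3varsI)

lemma WKe_satisfies_ib_identities: "(s, t) \<in> set ib_identities \<Longrightarrow> satisfies WKe s t"
  unfolding ib_identities_def Let_def
  by (auto simp: UNIV_wk intro!: satisfies_3varsI)

definition alg_closed :: "'a alg \<Rightarrow> bool" where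
  "alg_closed A \<longleftrightarrow> zero A \<in> carrier A \<and> one A \<in> carrier A \<and>
     (\<forall>x \<in> carrier A. \<forall>y \<in> carrier A. meet A x y \<in> carrier A \<and> join A x y \<in> carrier A) \<and>
     (\<forall>x \<in> carrier A. neg A x \<in> carrier A \<and> J2 A x \<in> carrier A)"

lemma satisfies_3vars_list:
  assumes "\<And>s t. (s, t) \<in> set es \<Longrightarrow> satisfies A s t"
    and "\<And>s t. (s, t) \<in> set es \<Longrightarrow> set_tm s \<union> set_tm t \<subseteq> {0, 1, 2}"
  shows "\<forall>(s, t) \<in> set es. \<forall>x \<in> carrier A. \<forall>y \<in> carrier A. \<forall>w \<in> carrier A.
           eval A ((!) [x, y, w]) s = eval A ((!) [x, y, w]) t"
  using satisfies_3varsD[OF assms] by blast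

lemma boolean_algebra_reduct_if_satisfies:
  assumes "alg_closed A" and "\<And>s t. (s, t) \<in> set ba_identities \<Longrightarrow> satisfies A s t"
  shows "boolean_algebra_reduct A"
proof -
  have "\<forall>(s, t) \<in> set ba_identities. \<forall>x \<in> carrier A. \<forall>y \<in> carrier A. \<forall>w \<in> carrier A.
           eval A ((!) [x, y, w]) s = eval A ((!) [x, y, w]) t"
    using assms(2) by (rule satisfies_3vars_list) (auto simp: ba_identities_def Let_def)
  moreover have nonempty: "\<exists>c. c \<in> carrier A"
    using assms(1) by (auto simp: alg_closed_def)
  (* no_asm_use: used as rewrite rules, distributivity would destroy the absorption laws *)
  ultimately show ?thesis
    using assms(1)
    unfolding boolean_algebra_reduct_def alg_closed_def ba_identities_def Let_def
    by (simp (no_asm_use) add: nonempty ball_conj_distrib) (elim conjE; intro conjI; assumption)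
qed

lemma involutive_bisemilattice_if_satisfies:
  assumes "alg_closed A" and "\<And>s t. (s, t) \<in> set ib_identities \<Longrightarrow> satisfies A s t"
  shows "involutive_bisemilattice A"
proof -
  have "\<forall>(s, t) \<in> set ib_identities. \<forall>x \<in> carrier A. \<forall>y \<in> carrier A. \<forall>w \<in> carrier A.
           eval A ((!) [x, y, w]) s = eval A ((!) [x, y, w]) t"
    using assms(2) by (rule satisfies_3vars_list) (auto simp: ib_identities_def Let_def)
  moreover have nonempty: "\<exists>c. c \<in> carrier A"
    using assms(1) by (auto simp: alg_closed_def)
  ultimately show ?thesis
    using assms(1)
    unfolding involutive_bisemilattice_def alg_closed_def ib_identities_def Let_def
    by (simp (no_asm_use) add: nonempty ball_conj_distrib) (elim conjE; intro conjI; assumption)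
qed

locale wk_subpower_image =
  fixes S :: "('i \<Rightarrow> wk) set" and h :: "('i \<Rightarrow> wk) \<Rightarrow> 'a" and A :: "'a alg"
  assumes subuniv: "subuniv_power S" and hom: "onto_hom S h A"
begin

lemma carrier_eq: "carrier A = h ` S"
  using hom by (simp add: onto_hom_def)

lemma h_ops:
  "h (\<lambda>_. W0) = zero A" "h (\<lambda>_. W1) = one A"
  "f \<in> S \<Longrightarrow> g \<in> S \<Longrightarrow> h (\<lambda>i. wk_meet (f i) (g i)) = meet A (h f) (h g)"
  "f \<in> S \<Longrightarrow> g \<in> S \<Longrightarrow> h (\<lambda>i. wk_join (f i) (g i)) = join A (h f) (h g)"
  "f \<in> S \<Longrightarrow> h (\<lambda>i. wk_neg (f i)) = neg A (h f)"
  "f \<in> S \<Longrightarrow> h (\<lambda>i. wk_J2 (f i)) = J2 A (h f)"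
  using hom by (simp_all add: onto_hom_def)

lemma pointwise_eval_mem:
  "(\<And>v. v \<in> set_tm t \<Longrightarrow> F v \<in> S) \<Longrightarrow> (\<lambda>i. eval WKe (\<lambda>v. F v i) t) \<in> S"
  using subuniv by (induction t) (auto simp: subuniv_power_def)

lemma h_pointwise_eval:
  "(\<And>v. v \<in> set_tm t \<Longrightarrow> F v \<in> S) \<Longrightarrow>
     h (\<lambda>i. eval WKe (\<lambda>v. F v i) t) = eval A (\<lambda>v. h (F v)) t"
  by (induction t) (simp_all add: h_ops pointwise_eval_mem)

lemma alg_closed: "alg_closed A"
  using subuniv unfolding alg_closed_def carrier_eq subuniv_power_def
  by (auto simp flip: h_ops)

lemma satisfies_if_subalgebra_satisfies:
  assumes "satisfies (WKe\<lparr>carrier := B\<rparr>) s t" and "carrier A \<subseteq> h ` {f \<in> S. range f \<subseteq> B}"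
  shows "satisfies A s t"
  unfolding satisfies_def
proof (intro allI impI)
  let ?V = "set_tm s \<union> set_tm t"
  fix \<rho> assume "\<forall>v \<in> ?V. \<rho> v \<in> carrier A"
  then have "\<forall>v \<in> ?V. \<exists>f. f \<in> S \<and> range f \<subseteq> B \<and> h f = \<rho> v"
    using assms(2) by force
  then obtain F where F: "\<forall>v \<in> ?V. F v \<in> S \<and> range (F v) \<subseteq> B \<and> h (F v) = \<rho> v"
    by (metis bchoice)
  have "eval WKe (\<lambda>v. F v i) s = eval WKe (\<lambda>v. F v i) t" for i
  proof -
    have "\<forall>v \<in> ?V. F v i \<in> B"
      using F by blast
    then show ?thesis
      using assms(1) unfolding satisfies_def by simp
  qed
  moreover have "eval A \<rho> u = h (\<lambda>i. eval WKe (\<lambda>v. F v i) u)" if "set_tm u \<subseteq> ?V" for u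
  proof -
    have "eval A \<rho> u = eval A (\<lambda>v. h (F v)) u"
      using that F by (intro eval_cong) auto
    also have "\<dots> = h (\<lambda>i. eval WKe (\<lambda>v. F v i) u)"
      using that F by (intro h_pointwise_eval[symmetric]) auto
    finally show ?thesis .
  qed
  ultimately show "eval A \<rho> s = eval A \<rho> t"
    by simp
qed

lemma satisfies_if_WKe_satisfies: "satisfies WKe s t \<Longrightarrow> satisfies A s t"
  by (rule satisfies_if_subalgebra_satisfies[where B = UNIV]) (simp_all add: WKe_def carrier_eq)

lemma carrier_subset_image_boolean:
  assumes "\<forall>x \<in> carrier A. J2 A x = x"
  shows "carrier A \<subseteq> h ` {f \<in> S. range f \<subseteq> {W0, W1}}"
proof
  fix x assume x: "x \<in> carrier A"
  then obtain f where f: "f \<in> S" "x = h f"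
    using carrier_eq by auto
  have "x = h (\<lambda>i. wk_J2 (f i))"
    using assms x f by (simp add: h_ops)
  moreover have "(\<lambda>i. wk_J2 (f i)) \<in> S"
    using subuniv f(1) by (simp add: subuniv_power_def)
  moreover have "range (\<lambda>i. wk_J2 (f i)) \<subseteq> {W0, W1}"
    using wk_J2.elims by blast
  ultimately show "x \<in> h ` {f \<in> S. range f \<subseteq> {W0, W1}}"
    by blast
qed

lemma satisfies_if_WK2_satisfies:
  "\<forall>x \<in> carrier A. J2 A x = x \<Longrightarrow> satisfies WK2 s t \<Longrightarrow> satisfies A s t"
  by (rule satisfies_if_subalgebra_satisfies[where B = "{W0, W1}"])
    (simp_all add: WK2_def carrier_subset_image_boolean)

end

lemma in_V_BCA_iff_subpower_image:
  "in_V_BCA TYPE('i) A \<longleftrightarrow> (\<exists>(S :: ('i \<Rightarrow> wk) set) h. wk_subpower_image S h A)"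
  by (simp add: in_V_BCA_def wk_subpower_image_def)

lemma V_BCA_alg_closed: "in_V_BCA TYPE('i) A \<Longrightarrow> alg_closed A"
  using wk_subpower_image.alg_closed unfolding in_V_BCA_iff_subpower_image by blast

lemma V_BCA_satisfies_WKe: "in_V_BCA TYPE('i) A \<Longrightarrow> satisfies WKe s t \<Longrightarrow> satisfies A s t"
  using wk_subpower_image.satisfies_if_WKe_satisfies unfolding in_V_BCA_iff_subpower_image by blast

lemma V_BCA_satisfies_WK2:
  "in_V_BCA TYPE('i) A \<Longrightarrow> \<forall>x \<in> carrier A. J2 A x = x \<Longrightarrow> satisfies WK2 s t \<Longrightarrow>
     satisfies A s t"
  using wk_subpower_image.satisfies_if_WK2_satisfies unfolding in_V_BCA_iff_subpower_image by blast

lemma V_BCA_boolean_algebra_reduct: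
  assumes "in_V_BCA TYPE('i) A" and "\<forall>x \<in> carrier A. J2 A x = x"
  shows "boolean_algebra_reduct A"
proof (rule boolean_algebra_reduct_if_satisfies)
  show "alg_closed A"
    using assms(1) by (rule V_BCA_alg_closed)
  show "satisfies A s t" if "(s, t) \<in> set ba_identities" for s t
    by (rule V_BCA_satisfies_WK2[OF assms WK2_satisfies_ba_identities[OF that]])
qed

lemma V_BCA_involutive_bisemilattice:
  assumes "in_V_BCA TYPE('i) A"
  shows "involutive_bisemilattice A"
proof (rule involutive_bisemilattice_if_satisfies)
  show "alg_closed A"
    using assms by (rule V_BCA_alg_closed)
  show "satisfies A s t" if "(s, t) \<in> set ib_identities" for s t
    by (rule V_BCA_satisfies_WKe[OF assms WKe_satisfies_ib_identities[OF that]])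
qed

lemma V_BCA_J2_id_if_boolean_algebra_reduct:
  assumes "in_V_BCA TYPE('i) A" and "boolean_algebra_reduct A" and x: "x \<in> carrier A"
  shows "J2 A x = x"
proof -
  have "satisfies WKe (Meet (Jtwo (Var 0)) (Join (Jtwo (Var 0)) (Var 0))) (Var (0::nat))"
    by (auto simp: UNIV_wk intro!: satisfies_3varsI)
  note identity = satisfies_3varsD[OF V_BCA_satisfies_WKe[OF assms(1) this] _ x x x]
  have "J2 A x \<in> carrier A"
    using V_BCA_alg_closed[OF assms(1)] x by (simp add: alg_closed_def)
  then have "meet A (J2 A x) (join A (J2 A x) x) = J2 A x"
    using assms(2) x unfolding boolean_algebra_reduct_def Let_def by blast
  then show ?thesis
    using identity by simp
qed

lemma V_BCA_join_eq_meet_if_J2_one: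
  assumes "in_V_BCA TYPE('i) A" and "\<forall>x \<in> carrier A. J2 A x = one A"
    and x: "x \<in> carrier A" and y: "y \<in> carrier A"
  shows "join A x y = meet A x y"
proof -
  have closed: "meet A x y \<in> carrier A" "join A x y \<in> carrier A"
    using V_BCA_alg_closed[OF assms(1)] x y by (simp_all add: alg_closed_def)
  let ?x = "Var (0::nat)" and ?y = "Var 1"
  have "satisfies WKe (Meet ?x ?y) (Meet (Join ?x ?y) (Jtwo (Meet ?x ?y)))"
    and "satisfies WKe (Meet ?x Top) ?x"
    by (auto simp: UNIV_wk intro!: satisfies_3varsI)
  note identities = this[THEN V_BCA_satisfies_WKe[OF assms(1)], THEN satisfies_3varsD]
  from identities(1)[OF _ x y y]
  have "meet A x y = meet A (join A x y) (J2 A (meet A x y))"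
    by simp
  also have "\<dots> = meet A (join A x y) (one A)"
    using assms(2) closed by simp
  also have "\<dots> = join A x y"
    using identities(2)[OF _ closed(2) closed(2) closed(2)] by simp
  finally show ?thesis
    by simp
qed

lemma V_BCA_J2_one_if_semilattice_reduct:
  assumes "in_V_BCA TYPE('i) A" and "semilattice_reduct A" and x: "x \<in> carrier A"
  shows "J2 A x = one A"
proof -
  have closed: "J2 A x \<in> carrier A" "one A \<in> carrier A"
    using V_BCA_alg_closed[OF assms(1)] x by (simp_all add: alg_closed_def)
  have "satisfies WKe (Meet Bot (Jtwo (Var (0::nat)))) (Meet Bot Top)"
    by (auto simp: UNIV_wk intro!: satisfies_3varsI)
  from satisfies_3varsD[OF V_BCA_satisfies_WKe[OF assms(1) this] _ x x x]
  have zero_meet: "meet A (zero A) (J2 A x) = meet A (zero A) (one A)"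
    by simp
  have zero_join: "join A (zero A) a = a" if "a \<in> carrier A" for a
    using assms(2) that unfolding semilattice_reduct_def involutive_bisemilattice_def Let_def
    by blast
  have zero_join_eq_meet: "join A (zero A) a = meet A (zero A) a" if "a \<in> carrier A" for a
    using assms(2) that unfolding semilattice_reduct_def involutive_bisemilattice_def Let_def
    by blast
  have "J2 A x = meet A (zero A) (J2 A x)"
    using zero_join[OF closed(1)] zero_join_eq_meet[OF closed(1)] by simp
  also have "\<dots> = meet A (zero A) (one A)"
    by (rule zero_meet)
  also have "\<dots> = one A"
    using zero_join[OF closed(2)] zero_join_eq_meet[OF closed(2)] by simp
  finally show ?thesis .
qed

theorem lemma4p9:
  fixes A :: "'a alg"
  assumes "in_V_BCA TYPE('i) A"
  shows "((\<forall>x\<in>carrier A. J2 A x = x) \<longleftrightarrow> boolean_algebra_reduct A)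
       \<and> ((\<forall>x\<in>carrier A. J2 A x = one A) \<longleftrightarrow> semilattice_reduct A)"
proof -
  have "(\<forall>x \<in> carrier A. J2 A x = x) \<longleftrightarrow> boolean_algebra_reduct A"
    using V_BCA_boolean_algebra_reduct[OF assms] V_BCA_J2_id_if_boolean_algebra_reduct[OF assms]
    by blast
  moreover have "(\<forall>x \<in> carrier A. J2 A x = one A) \<longleftrightarrow> semilattice_reduct A"
    using V_BCA_J2_one_if_semilattice_reduct[OF assms] V_BCA_involutive_bisemilattice[OF assms]
      V_BCA_join_eq_meet_if_J2_one[OF assms]
    unfolding semilattice_reduct_def by blast
  ultimately show ?thesis ..
qed

end
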